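(* There is an absolute constant $C>0$ such that the following holds. Let $\mu\in\mathbb{R}^2$, and let $v_1,v_2\in\mathbb{R}^2$ be linearly independent unit vectors. Let $\epsilon,\gamma>0$. Suppose the following hold. - Estimates $\hat d_1\ge\hat d_2\ge0$ are known with $|\hat d_1-\langle v_1,\mu\rangle|\le\epsilon$ and $|\hat d_2-\langle v_2,\mu\rangle|\le\epsilon$. - For all $u_1\in\{\pm v_1\}$ and $u_2\in\{\pm v_2\}$, $\Pr_{X\sim\mathcal{N}(\mu,I)}\{\langle X,u_1\rangle\ge0,\langle X,u_2\rangle\ge0\}\ge\gamma$. - Estimates $\hat\gamma_{s_1,s_2}$, for $s_1\in\{\pm v_1\}$ and $s_2\in\{\pm v_2\}$, are known with $|\hat\gamma_{s_1,s_2}-\Pr_{X\sim\mathcal{N}(\mu,I)}\{\langle X,s_1\rangle\ge0,\langle X,s_2\rangle\ge0\}|\le\epsilon$. Then an estimate $\hat\beta$ can be computed from $\hat d_1$, $\hat d_2$ and the four values $\hat\gamma_{s_1,s_2}$ (indexed by the sign pattern of $(s_1,s_2)$) such that $$|\hat\beta-\langle v_1,v_2\rangle|\le C\frac{\epsilon}{\gamma^4}\sqrt{\log(1/(\gamma\epsilon))}.$$ *)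

theory Defs
  imports "HOL-Probability.Probability"
begin

definition gauss2 :: "real^2 \<Rightarrow> (real^2) measure" where
  "gauss2 mu = density lborel
     (\<lambda>x. ennreal (exp (- (norm (x - mu))\<^sup>2 / 2) / (2 * pi)))"

definition gauss2_prob :: "real^2 \<Rightarrow> (real^2) set \<Rightarrow> real" where
  "gauss2_prob mu A = measure (gauss2 mu) A"

definition quad_prob :: "real^2 \<Rightarrow> real^2 \<Rightarrow> real^2 \<Rightarrow> real" where
  "quad_prob mu u1 u2 = gauss2_prob mu {x. x \<bullet> u1 \<ge> 0 \<and> x \<bullet> u2 \<ge> 0}"

end

(*
  Rotating coordinates so that v1 becomes the first axis turns the quadrant probability of
  N(mu, I) into std_quad_prob a t r, the standard Gaussian mass of
  {g. -a <= g$1 and -t <= <g, w r>} with a = <v1, mu>, t = <v2, mu>, r = <v1, v2> and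
  w r = (r, sqrt (1 - r^2)).  The estimate of r inverts r |-> std_quad_prob d1 d2 r at the
  observed mass of the (+,+) quadrant, and two facts make this inversion stable.
  First, std_quad_prob is 1-Lipschitz in (a, t), since Gaussian strips of width h have mass
  at most h; replacing a, t by d1, d2 therefore costs 2 eps.  Second, it grows at least
  linearly in r: raising r from r1 to r2 trades two opposite wedges at the corner c of the
  quadrant, and by the reflection exchanging them the net gain is the mass of a region that
  contains a parallelogram of area (r2 - r1) / 2 within distance 2 of c.  This gives the slope
  kappa = exp (- (|c| + 2)^2 / 2) / (4 pi).  Finally, one of the four sign quadrants at c lies
  in a half-plane at distance |c| from the origin, so gamma <= exp (- |c|^2 / 2) / 2 and
  kappa >= gamma^2 / (81 pi).  The error is thus O(eps / gamma^2), well within the stated rate.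
*)

theory Submission
  imports Defs
begin

section \<open>The standard Gaussian measure on the plane\<close>

lemma inner_vec2: "(x::real^2) \<bullet> y = x$1 * y$1 + x$2 * y$2"
  by (simp add: inner_vec_def sum_2)

lemma norm_vec2_square: "(norm (x::real^2))\<^sup>2 = (x$1)\<^sup>2 + (x$2)\<^sup>2"
  by (simp add: norm_vec_def L2_set_def sum_2)

lemma Basis_vec2: "(Basis :: (real^2) set) = {axis 1 1, axis 2 1}"
  by (auto simp: Basis_vec_def UNIV_2)

lemma nn_integral_lborel_vec2_product:
  fixes F G :: "real \<Rightarrow> ennreal"
  assumes "F \<in> borel_measurable borel" "G \<in> borel_measurable borel"
  shows "(\<integral>\<^sup>+x. F (x$1) * G (x$2) \<partial>(lborel::(real^2) measure))
    = (\<integral>\<^sup>+x. F x \<partial>lborel) * (\<integral>\<^sup>+x. G x \<partial>lborel)"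
proof -
  define f where "f = (\<lambda>b::real^2. if b = axis 1 1 then F else G)"
  have axis_neq: "axis 1 (1::real) \<noteq> (axis 2 1 :: real^2)"
    by (simp add: axis_eq_axis)
  have "(\<integral>\<^sup>+x. (\<Prod>b\<in>Basis. f b (x \<bullet> b)) \<partial>(lborel::(real^2) measure))
      = (\<Prod>b\<in>Basis. (\<integral>\<^sup>+x. f b x \<partial>lborel))"
    by (rule nn_integral_lborel_prod) (auto simp: f_def assms)
  then show ?thesis
    using axis_neq by (simp add: Basis_vec2 f_def inner_axis)
qed

lemma nn_integral_std_normal_density: "(\<integral>\<^sup>+x. ennreal (std_normal_density x) \<partial>lborel) = 1"
  using prob_space.emeasure_space_1[OF prob_space_normal_density[of 1 0]]
  by (simp add: emeasure_density)

lemma gauss2_density_0_eq_product: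
  "exp (- (norm (x::real^2))\<^sup>2 / 2) / (2 * pi) = std_normal_density (x$1) * std_normal_density (x$2)"
proof -
  have "(norm x)\<^sup>2 = (x$1)\<^sup>2 + (x$2)\<^sup>2"
    by (rule norm_vec2_square)
  moreover have "sqrt (2 * pi) * sqrt (2 * pi) = 2 * pi"
    by simp
  ultimately show ?thesis
    unfolding std_normal_density_def
    by (simp add: exp_add[symmetric] add_divide_distrib)
qed

lemma emeasure_gauss2_0:
  assumes "A \<in> sets borel"
  shows "emeasure (gauss2 0) A = (\<integral>\<^sup>+x. ennreal (std_normal_density (x$1))
    * ennreal (std_normal_density (x$2)) * indicator A x \<partial>lborel)"
proof -
  have "ennreal (exp (- (norm (x - 0))\<^sup>2 / 2) / (2 * pi))
      = ennreal (std_normal_density (x$1)) * ennreal (std_normal_density (x$2))" for x :: "real^2"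
    by (simp only: diff_zero gauss2_density_0_eq_product) (simp add: ennreal_mult'')
  then show ?thesis
    using assms unfolding gauss2_def by (simp add: emeasure_density)
qed

lemma sets_gauss2 [simp]: "sets (gauss2 mu) = sets borel"
  by (simp add: gauss2_def)

lemma prob_space_gauss2_0: "prob_space (gauss2 0)"
proof
  have "emeasure (gauss2 0) UNIV = (\<integral>\<^sup>+(x::real^2). ennreal (std_normal_density (x$1))
      * ennreal (std_normal_density (x$2)) \<partial>lborel)"
    by (simp add: emeasure_gauss2_0)
  also have "\<dots> = 1"
    by (subst nn_integral_lborel_vec2_product) (simp_all add: nn_integral_std_normal_density)
  finally show "emeasure (gauss2 0) (space (gauss2 0)) = 1"
    by (simp add: gauss2_def)
qed

lemma emeasure_gauss2_0_eq_ennreal: "emeasure (gauss2 0) A = ennreal (gauss2_prob 0 A)"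
proof -
  interpret prob_space "gauss2 0" by (rule prob_space_gauss2_0)
  show ?thesis unfolding gauss2_prob_def by (rule emeasure_eq_measure)
qed

lemma gauss2_prob_0_nonneg: "0 \<le> gauss2_prob 0 A"
  by (simp add: gauss2_prob_def)

lemma gauss2_prob_0_mono:
  assumes "A \<subseteq> B" "B \<in> sets borel"
  shows "gauss2_prob 0 A \<le> gauss2_prob 0 B"
proof -
  interpret prob_space "gauss2 0" by (rule prob_space_gauss2_0)
  show ?thesis
    unfolding gauss2_prob_def using assms by (intro finite_measure_mono) simp_all
qed

lemma gauss2_prob_0_split:
  assumes "A \<in> sets borel" "B \<in> sets borel"
  shows "gauss2_prob 0 A = gauss2_prob 0 (A \<inter> B) + gauss2_prob 0 (A - B)"
proof -
  interpret prob_space "gauss2 0" by (rule prob_space_gauss2_0)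
  have "measure (gauss2 0) ((A \<inter> B) \<union> (A - B))
      = measure (gauss2 0) (A \<inter> B) + measure (gauss2 0) (A - B)"
    using assms by (intro finite_measure_Union) auto
  moreover have "(A \<inter> B) \<union> (A - B) = A" by auto
  ultimately show ?thesis unfolding gauss2_prob_def by simp
qed

lemma gauss2_prob_0_union_le:
  assumes "A \<in> sets borel" "B \<in> sets borel"
  shows "gauss2_prob 0 (A \<union> B) \<le> gauss2_prob 0 A + gauss2_prob 0 B"
proof -
  interpret prob_space "gauss2 0" by (rule prob_space_gauss2_0)
  show ?thesis
    unfolding gauss2_prob_def using assms by (intro measure_Un_le) simp_all
qed

lemma gauss2_prob_0_first_coordinate:
  assumes "S \<in> sets borel"
  shows "ennreal (gauss2_prob 0 {z. z$1 \<in> S})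
    = (\<integral>\<^sup>+x. ennreal (std_normal_density x) * indicator S x \<partial>lborel)"
proof -
  have S: "{z::real^2. z$1 \<in> S} \<in> sets borel"
    using assms by measurable
  have "emeasure (gauss2 0) {z. z$1 \<in> S} = (\<integral>\<^sup>+(x::real^2).
      (ennreal (std_normal_density (x$1)) * indicator S (x$1)) * ennreal (std_normal_density (x$2)) \<partial>lborel)"
    by (simp add: emeasure_gauss2_0[OF S] mult_ac indicator_def)
  also have "\<dots> = (\<integral>\<^sup>+x. ennreal (std_normal_density x) * indicator S x \<partial>lborel)"
    using assms
    by (subst nn_integral_lborel_vec2_product) (simp_all add: nn_integral_std_normal_density)
  finally show ?thesis
    by (simp add: emeasure_gauss2_0_eq_ennreal)
qed

lemma std_normal_density_le_1: "std_normal_density x \<le> 1"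
proof -
  have "1 / sqrt (2 * pi) \<le> 1"
    using pi_gt3 by (simp add: divide_le_eq)
  moreover have "exp (- x\<^sup>2 / 2) \<le> 1"
    by simp
  ultimately have "1 / sqrt (2 * pi) * exp (- x\<^sup>2 / 2) \<le> 1 * 1"
    by (intro mult_mono) simp_all
  then show ?thesis
    unfolding std_normal_density_def by simp
qed

lemma nn_integral_std_normal_density_nonneg_half:
  "(\<integral>\<^sup>+x. ennreal (std_normal_density x) * indicator {0..} x \<partial>lborel) = ennreal (1/2)"
proof -
  let ?I = "\<lambda>S. \<integral>\<^sup>+x. ennreal (std_normal_density x) * indicator S x \<partial>lborel"
  have "?I {..<0} = ennreal \<bar>-1\<bar> * (\<integral>\<^sup>+x. ennreal (std_normal_density (0 + -1 * x))
      * indicator {..<0} (0 + -1 * x) \<partial>lborel)"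
    by (rule nn_integral_real_affine) simp_all
  also have "\<dots> = ?I {0<..}"
    by (simp add: std_normal_density_def indicator_def)
  also have "\<dots> = ?I {0..}"
    using AE_lborel_singleton[of 0]
    by (intro nn_integral_cong_AE, eventually_elim) (auto simp: indicator_def)
  finally have neg: "?I {..<0} = ?I {0..}" .
  have "?I {0..} + ?I {..<0} = (\<integral>\<^sup>+x. ennreal (std_normal_density x) \<partial>lborel)"
    by (subst nn_integral_add[symmetric]) (auto intro!: nn_integral_cong simp: indicator_def)
  then have "?I {0..} + ?I {0..} = 1"
    using neg nn_integral_std_normal_density by simp
  then have "?I {0..} \<noteq> \<top>"
    by (metis ennreal_add_eq_top ennreal_one_neq_top)
  then obtain r where r: "?I {0..} = ennreal r" "0 \<le> r"
    by (cases "?I {0..}" rule: ennreal_cases) auto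
  with \<open>?I {0..} + ?I {0..} = 1\<close> have "r = 1/2"
    by (simp add: ennreal_plus[symmetric] del: ennreal_plus)
  with r show ?thesis
    by simp
qed

lemma nn_integral_std_normal_density_interval_le:
  assumes "0 \<le> h"
  shows "(\<integral>\<^sup>+x. ennreal (std_normal_density x) * indicator {t..t+h} x \<partial>lborel) \<le> ennreal h"
proof -
  have "(\<integral>\<^sup>+x. ennreal (std_normal_density x) * indicator {t..t+h} x \<partial>lborel)
      \<le> (\<integral>\<^sup>+x. ennreal 1 * indicator {t..t+h} x \<partial>lborel)"
    by (intro nn_integral_mono mult_right_mono ennreal_leI std_normal_density_le_1) simp
  then show ?thesis
    using assms by simp
qed

lemma nn_integral_std_normal_density_tail_le:
  assumes "0 \<le> t"
  shows "(\<integral>\<^sup>+x. ennreal (std_normal_density x) * indicator {t..} x \<partial>lborel)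
    \<le> ennreal (exp (- t\<^sup>2 / 2) / 2)"
proof -
  have shift: "std_normal_density (t + y) \<le> exp (- t\<^sup>2 / 2) * std_normal_density y" if "0 \<le> y" for y
  proof -
    have "(t + y)\<^sup>2 = t\<^sup>2 + y\<^sup>2 + 2 * (t * y)"
      by (simp add: power2_eq_square algebra_simps)
    then have "- (t + y)\<^sup>2 / 2 \<le> - t\<^sup>2 / 2 + - y\<^sup>2 / 2"
      using mult_nonneg_nonneg[OF assms that] by linarith
    then have "exp (- (t + y)\<^sup>2 / 2) \<le> exp (- t\<^sup>2 / 2) * exp (- y\<^sup>2 / 2)"
      by (simp add: exp_add[symmetric])
    then show ?thesis
      unfolding std_normal_density_def by (simp add: divide_right_mono mult_ac)
  qed
  have "(\<integral>\<^sup>+x. ennreal (std_normal_density x) * indicator {t..} x \<partial>lborel)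
      = ennreal \<bar>1\<bar> * (\<integral>\<^sup>+y. ennreal (std_normal_density (t + 1 * y))
          * indicator {t..} (t + 1 * y) \<partial>lborel)"
    by (rule nn_integral_real_affine) simp_all
  also have "\<dots> = (\<integral>\<^sup>+y. ennreal (std_normal_density (t + y)) * indicator {0..} y \<partial>lborel)"
    by (simp add: indicator_def)
  also have "\<dots> \<le> (\<integral>\<^sup>+y. ennreal (exp (- t\<^sup>2 / 2))
      * (ennreal (std_normal_density y) * indicator {0..} y) \<partial>lborel)"
    using shift by (intro nn_integral_mono) (simp add: indicator_def ennreal_mult''[symmetric] ennreal_leI)
  also have "\<dots> = ennreal (exp (- t\<^sup>2 / 2)) * ennreal (1/2)"
    by (subst nn_integral_cmult) (simp_all add: nn_integral_std_normal_density_nonneg_half)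
  also have "\<dots> = ennreal (exp (- t\<^sup>2 / 2) * (1/2))"
    by (rule ennreal_mult[symmetric]) simp_all
  finally show ?thesis
    by simp
qed

lemma gauss2_prob_0_strip_le:
  assumes "0 \<le> h"
  shows "gauss2_prob 0 {z. t \<le> z$1 \<and> z$1 \<le> t + h} \<le> h"
proof -
  have "ennreal (gauss2_prob 0 {z. z$1 \<in> {t..t+h}}) \<le> ennreal h"
    using gauss2_prob_0_first_coordinate[of "{t..t+h}"]
      nn_integral_std_normal_density_interval_le[OF assms, of t] by simp
  then show ?thesis
    using assms by simp
qed

lemma gauss2_prob_0_tail_le:
  assumes "0 \<le> t"
  shows "gauss2_prob 0 {z. t \<le> z$1} \<le> exp (- t\<^sup>2 / 2) / 2"
proof -
  have "ennreal (gauss2_prob 0 {z. z$1 \<in> {t..}}) \<le> ennreal (exp (- t\<^sup>2 / 2) / 2)"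
    using gauss2_prob_0_first_coordinate[of "{t..}"]
      nn_integral_std_normal_density_tail_le[OF assms] by simp
  then show ?thesis
    by simp
qed

section \<open>Invariance under isometries\<close>

lemma borel_measurable_orthogonal_transformation:
  fixes f :: "'a::euclidean_space \<Rightarrow> 'a"
  assumes "orthogonal_transformation f"
  shows "f \<in> borel_measurable borel"
  using orthogonal_transformation_linear[OF assms]
  by (intro borel_measurable_continuous_onI linear_continuous_on) (simp add: linear_conv_bounded_linear)

lemma distr_lborel_orthogonal_transformation_plus:
  fixes f :: "real^'n::{finite,wellorder} \<Rightarrow> real^'n::{finite,wellorder}"
  assumes f: "orthogonal_transformation f"
  shows "distr lborel borel (\<lambda>z. f z + c) = lborel"
proof (rule lborel_eqI[symmetric])
  show "sets (distr lborel borel (\<lambda>z. f z + c)) = sets borel"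
    by simp
  fix l u :: "(real, 'n) vec"
  assume "\<And>b. b \<in> Basis \<Longrightarrow> l \<bullet> b \<le> u \<bullet> b"
  let ?T = "\<lambda>z. f z + c"
  have T_meas: "?T \<in> borel_measurable borel"
    using borel_measurable_orthogonal_transformation[OF f] by simp
  have preimage: "?T -` box l u = inv f ` ((\<lambda>x. x - c) ` box l u)"
  proof -
    have "f (inv f x) = x" "inv f (f x) = x" for x
      using f by (simp_all add: orthogonal_transformation_surj orthogonal_transformation_inj
        surj_f_inv_f inv_f_f)
    then show ?thesis
      by (auto simp: image_iff) (metis add_diff_cancel)
  qed
  have borel: "?T -` box l u \<in> sets borel"
    using measurable_sets[OF T_meas, of "box l u"] by simp
  have translated: "(\<lambda>x. x - c) ` box l u \<in> lmeasurable"
    by (rule measurable_translation_subtract) simp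
  have "measure lebesgue (?T -` box l u) = measure lebesgue (box l u)"
    unfolding preimage measure_orthogonal_image[OF orthogonal_transformation_inv[OF f] translated]
    by (simp add: measure_translation_subtract)
  moreover have "?T -` box l u \<in> lmeasurable"
    unfolding preimage by (rule measurable_orthogonal_image[OF orthogonal_transformation_inv[OF f] translated])
  ultimately have "emeasure lebesgue (?T -` box l u) = emeasure lebesgue (box l u)"
    by (simp add: emeasure_eq_measure2)
  then have "emeasure lborel (?T -` box l u) = emeasure lborel (box l u)"
    using borel by simp
  then show "emeasure (distr lborel borel ?T) (box l u) = (\<Prod>b\<in>Basis. (u - l) \<bullet> b)"
    using T_meas \<open>\<And>b. b \<in> Basis \<Longrightarrow> l \<bullet> b \<le> u \<bullet> b\<close> by (simp add: emeasure_distr)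
qed

lemma gauss2_prob_orthogonal_change:
  assumes f: "orthogonal_transformation f" and A: "A \<in> sets borel"
  shows "gauss2_prob mu A = gauss2_prob 0 {z. f z + mu \<in> A}"
proof -
  let ?T = "\<lambda>z. f z + mu"
  let ?g = "\<lambda>x. ennreal (exp (- (norm (x - mu))\<^sup>2 / 2) / (2 * pi)) * indicator A x"
  have T_meas: "?T \<in> borel_measurable borel"
    using borel_measurable_orthogonal_transformation[OF f] by simp
  have B: "{z. f z + mu \<in> A} \<in> sets borel"
    using measurable_sets[OF T_meas A] by (simp add: vimage_def)
  have "emeasure (gauss2 mu) A = (\<integral>\<^sup>+x. ?g x \<partial>lborel)"
    unfolding gauss2_def using A by (simp add: emeasure_density)
  also have "\<dots> = (\<integral>\<^sup>+x. ?g x \<partial>distr lborel borel ?T)"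
    by (simp add: distr_lborel_orthogonal_transformation_plus[OF f])
  also have "\<dots> = (\<integral>\<^sup>+z. ?g (?T z) \<partial>lborel)"
    using A T_meas by (intro nn_integral_distr) simp_all
  also have "\<dots> = (\<integral>\<^sup>+z. ennreal (exp (- (norm (z - 0))\<^sup>2 / 2) / (2 * pi))
      * indicator {z. f z + mu \<in> A} z \<partial>lborel)"
    by (simp add: orthogonal_transformation_norm[OF f] indicator_def)
  also have "\<dots> = emeasure (gauss2 0) {z. f z + mu \<in> A}"
    unfolding gauss2_def using B by (simp add: emeasure_density)
  finally show ?thesis
    unfolding gauss2_prob_def measure_def by simp
qed

definition frame_map :: "real^2 \<Rightarrow> real^2 \<Rightarrow> real^2 \<Rightarrow> real^2" where
  "frame_map p q z = z$1 *\<^sub>R p + z$2 *\<^sub>R q"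

lemma linear_frame_map: "linear (frame_map p q)"
  by (rule linearI) (auto simp: frame_map_def algebra_simps)

lemma orthogonal_transformation_frame_map:
  assumes "p \<bullet> p = 1" "q \<bullet> q = 1" "p \<bullet> q = 0"
  shows "orthogonal_transformation (frame_map p q)"
  unfolding orthogonal_transformation_def
proof (intro conjI allI)
  show "linear (frame_map p q)"
    by (rule linear_frame_map)
  fix v w :: "real^2"
  show "frame_map p q v \<bullet> frame_map p q w = v \<bullet> w"
    using assms
    by (simp add: frame_map_def inner_add_left inner_add_right inner_commute[of q p])
      (simp add: inner_vec2)
qed

lemma gauss2_prob_0_direction:
  assumes u: "u \<bullet> u = 1" and P: "Measurable.pred borel P"
  shows "gauss2_prob 0 {g. P (g \<bullet> u)} = gauss2_prob 0 {z. P (z$1)}"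
proof -
  define u' where "u' = (vector [- u$2, u$1] :: real^2)"
  have frame: "orthogonal_transformation (frame_map u u')"
    using u by (intro orthogonal_transformation_frame_map) (simp_all add: u'_def inner_vec2)
  have "frame_map u u' z \<bullet> u = z$1 * (u \<bullet> u)" for z
    by (simp add: frame_map_def u'_def inner_vec2 algebra_simps)
  moreover have "{g::real^2. P (g \<bullet> u)} \<in> sets borel"
    using P by measurable
  ultimately show ?thesis
    using gauss2_prob_orthogonal_change[OF frame, of "{g. P (g \<bullet> u)}" 0] u by simp
qed

lemma gauss2_prob_0_slab_le:
  assumes "u \<bullet> u = 1" "0 \<le> h"
  shows "gauss2_prob 0 {g. t \<le> g \<bullet> u \<and> g \<bullet> u \<le> t + h} \<le> h"
  using gauss2_prob_0_direction[OF assms(1), of "\<lambda>x. t \<le> x \<and> x \<le> t + h"]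
    gauss2_prob_0_strip_le[OF assms(2)] by simp

lemma gauss2_prob_0_halfplane_le:
  assumes "u \<bullet> u = 1" "0 \<le> t"
  shows "gauss2_prob 0 {g. t \<le> g \<bullet> u} \<le> exp (- t\<^sup>2 / 2) / 2"
  using gauss2_prob_0_direction[OF assms(1), of "\<lambda>x. t \<le> x"]
    gauss2_prob_0_tail_le[OF assms(2)] by simp

section \<open>Quadrant probabilities in standard position\<close>

definition unit_of_cos :: "real \<Rightarrow> real^2" where
  "unit_of_cos r = vector [r, sqrt (1 - r\<^sup>2)]"

lemma inner_unit_of_cos: "g \<bullet> unit_of_cos r = g$1 * r + g$2 * sqrt (1 - r\<^sup>2)"
  by (simp add: unit_of_cos_def inner_vec2)

lemma unit_of_cos_component [simp]:
  "unit_of_cos r $ 1 = r" "unit_of_cos r $ 2 = sqrt (1 - r\<^sup>2)"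
  by (simp_all add: unit_of_cos_def)

lemma sqrt_one_minus_square:
  assumes "\<bar>r\<bar> \<le> 1"
  shows "(sqrt (1 - r\<^sup>2))\<^sup>2 = 1 - r\<^sup>2"
  using assms by (simp add: abs_square_le_1)

lemma sqrt_one_minus_square_pos:
  assumes "\<bar>r\<bar> < 1"
  shows "0 < sqrt (1 - r\<^sup>2)"
  using assms by (simp add: abs_square_less_1)

lemma inner_unit_of_cos_self:
  assumes "\<bar>r\<bar> \<le> 1"
  shows "unit_of_cos r \<bullet> unit_of_cos r = 1"
  using sqrt_one_minus_square[OF assms]
  by (simp add: inner_unit_of_cos power2_eq_square)

lemma quad_prob_eq_std_coordinates:
  assumes v1: "norm v1 = 1" and v2: "norm v2 = 1" and r: "\<bar>v1 \<bullet> v2\<bar> < 1"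
  shows "quad_prob mu (s1 *\<^sub>R v1) (s2 *\<^sub>R v2) = gauss2_prob 0
    {g. 0 \<le> s1 * (g$1 + v1 \<bullet> mu) \<and> 0 \<le> s2 * (g \<bullet> unit_of_cos (v1 \<bullet> v2) + v2 \<bullet> mu)}"
proof -
  define \<rho> where "\<rho> = v1 \<bullet> v2"
  define s where "s = sqrt (1 - \<rho>\<^sup>2)"
  define q where "q = (1 / s) *\<^sub>R (v2 - \<rho> *\<^sub>R v1)"
  have s: "0 < s" "s\<^sup>2 = 1 - \<rho>\<^sup>2"
    using r sqrt_one_minus_square_pos sqrt_one_minus_square unfolding s_def \<rho>_def by auto
  have v11: "v1 \<bullet> v1 = 1" and v22: "v2 \<bullet> v2 = 1"
    using v1 v2 by (simp_all add: norm_eq_1)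
  have q_v1: "v1 \<bullet> q = 0"
    by (simp add: q_def \<rho>_def inner_diff_right v11)
  have q_v2: "v2 \<bullet> q = s"
  proof -
    have "v2 \<bullet> q = (1 - \<rho>\<^sup>2) / s"
      by (simp add: q_def \<rho>_def inner_diff_right v22 inner_commute[of v2 v1] power2_eq_square)
    moreover have "1 - \<rho>\<^sup>2 = s * s"
      using s(2) by (simp add: power2_eq_square)
    ultimately show ?thesis
      using s(1) by simp
  qed
  have q_q: "q \<bullet> q = 1"
    using s q_v1 q_v2
    by (simp add: q_def inner_diff_left inner_commute[of q v2] inner_commute[of q v1])
  have frame: "orthogonal_transformation (frame_map v1 q)"
    using v11 q_q q_v1 by (rule orthogonal_transformation_frame_map)
  have "(frame_map v1 q z + mu) \<bullet> v1 = z$1 + v1 \<bullet> mu"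
    and "(frame_map v1 q z + mu) \<bullet> v2 = z \<bullet> unit_of_cos \<rho> + v2 \<bullet> mu" for z
    using v11 q_v1 q_v2
    by (simp_all add: frame_map_def inner_add_left inner_commute[of q] inner_commute[of v1 v2]
      inner_commute[of mu] inner_unit_of_cos s_def \<rho>_def)
  moreover have "quad_prob mu (s1 *\<^sub>R v1) (s2 *\<^sub>R v2) = gauss2_prob 0
      {z. frame_map v1 q z + mu \<in> {x. 0 \<le> x \<bullet> (s1 *\<^sub>R v1) \<and> 0 \<le> x \<bullet> (s2 *\<^sub>R v2)}}"
    unfolding quad_prob_def by (rule gauss2_prob_orthogonal_change[OF frame]) measurable
  ultimately show ?thesis
    unfolding \<rho>_def by (simp add: mult.commute)
qed

definition halfplane_e1 :: "real \<Rightarrow> (real^2) set" where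
  "halfplane_e1 a = {g. -a \<le> g$1}"

definition halfplane_cos :: "real \<Rightarrow> real \<Rightarrow> (real^2) set" where
  "halfplane_cos t r = {g. -t \<le> g \<bullet> unit_of_cos r}"

lemma halfplane_e1_sets [measurable]: "halfplane_e1 a \<in> sets borel"
  unfolding halfplane_e1_def by measurable

lemma halfplane_cos_sets [measurable]: "halfplane_cos t r \<in> sets borel"
  unfolding halfplane_cos_def by measurable

definition std_quad_prob :: "real \<Rightarrow> real \<Rightarrow> real \<Rightarrow> real" where
  "std_quad_prob a t r = gauss2_prob 0 (halfplane_e1 a \<inter> halfplane_cos t r)"

lemma std_quad_prob_diff_le:
  assumes r: "\<bar>r\<bar> \<le> 1"
  shows "std_quad_prob a t r - std_quad_prob a' t' r \<le> \<bar>a - a'\<bar> + \<bar>t - t'\<bar>"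
proof -
  let ?X = "halfplane_e1 a \<inter> halfplane_cos t r"
  let ?Y = "halfplane_e1 a' \<inter> halfplane_cos t' r"
  let ?S1 = "{g::real^2. -a \<le> g$1 \<and> g$1 \<le> -a + \<bar>a - a'\<bar>}"
  let ?S2 = "{g::real^2. -t \<le> g \<bullet> unit_of_cos r \<and> g \<bullet> unit_of_cos r \<le> -t + \<bar>t - t'\<bar>}"
  have S: "?S1 \<in> sets borel" "?S2 \<in> sets borel"
    by measurable
  have "?X - ?Y \<subseteq> ?S1 \<union> ?S2"
    using abs_ge_self[of "a - a'"] abs_ge_self[of "t - t'"]
    by (auto simp: halfplane_e1_def halfplane_cos_def)
  then have "gauss2_prob 0 (?X - ?Y) \<le> gauss2_prob 0 ?S1 + gauss2_prob 0 ?S2"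
    using gauss2_prob_0_mono gauss2_prob_0_union_le[OF S] S by (meson order_trans sets.Un)
  moreover have "gauss2_prob 0 ?S1 \<le> \<bar>a - a'\<bar>"
    by (rule gauss2_prob_0_strip_le) simp
  moreover have "gauss2_prob 0 ?S2 \<le> \<bar>t - t'\<bar>"
    using inner_unit_of_cos_self[OF r] by (rule gauss2_prob_0_slab_le) simp
  moreover have "gauss2_prob 0 (?X \<inter> ?Y) \<le> gauss2_prob 0 ?Y"
    by (rule gauss2_prob_0_mono) auto
  ultimately show ?thesis
    unfolding std_quad_prob_def using gauss2_prob_0_split[of ?X ?Y] by simp
qed

lemma std_quad_prob_lipschitz:
  assumes "\<bar>r\<bar> \<le> 1"
  shows "\<bar>std_quad_prob a t r - std_quad_prob a' t' r\<bar> \<le> \<bar>a - a'\<bar> + \<bar>t - t'\<bar>"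
  using std_quad_prob_diff_le[OF assms, of a t a' t'] std_quad_prob_diff_le[OF assms, of a' t' a t]
  by (simp add: abs_minus_commute)

definition quadrant_corner :: "real \<Rightarrow> real \<Rightarrow> real \<Rightarrow> real^2" where
  "quadrant_corner a t r = vector [-a, (a * r - t) / sqrt (1 - r\<^sup>2)]"

lemma quadrant_corner_component: "quadrant_corner a t r $ 1 = -a"
  by (simp add: quadrant_corner_def)

lemma inner_quadrant_corner:
  assumes "\<bar>r\<bar> < 1"
  shows "quadrant_corner a t r \<bullet> unit_of_cos r = -t"
  using sqrt_one_minus_square_pos[OF assms]
  by (simp add: quadrant_corner_def inner_unit_of_cos)

lemma exists_unit_inner_eq_norm:
  fixes c :: "'a::euclidean_space"
  obtains u where "u \<bullet> u = 1" "c \<bullet> u = norm c"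
proof (cases "c = 0")
  case True
  obtain b :: 'a where "b \<in> Basis"
    using nonempty_Basis by blast
  with True show ?thesis
    by (intro that[of b]) simp_all
next
  case False
  then show ?thesis
    by (intro that[of "sgn c"]) (simp_all add: sgn_div_norm dot_square_norm power2_eq_square)
qed

lemma quadrant_mass_le_corner_tail:
  assumes r: "\<bar>r\<bar> < 1"
    and mass: "\<And>s1 s2. s1 \<in> {1, -1} \<Longrightarrow> s2 \<in> {1, -1} \<Longrightarrow>
      \<gamma> \<le> gauss2_prob 0 {g. 0 \<le> s1 * (g$1 + a) \<and> 0 \<le> s2 * (g \<bullet> unit_of_cos r + t)}"
  shows "2 * \<gamma> \<le> exp (- (norm (quadrant_corner a t r))\<^sup>2 / 2)"
proof -
  define c where "c = quadrant_corner a t r"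
  define s where "s = sqrt (1 - r\<^sup>2)"
  obtain u where u: "u \<bullet> u = 1" "c \<bullet> u = norm c"
    using exists_unit_inner_eq_norm by blast
  have s: "0 < s"
    using sqrt_one_minus_square_pos[OF r] by (simp add: s_def)
  define \<alpha> where "\<alpha> = (u$1 * s - u$2 * r) / s"
  define \<beta> where "\<beta> = u$2 / s"
  \<comment> \<open>the signs of \<open>\<alpha>, \<beta>\<close> select the quadrant at \<open>c\<close> contained in \<open>{g. norm c \<le> g \<bullet> u}\<close>\<close>
  have oblique: "d \<bullet> u = \<alpha> * d$1 + \<beta> * (d \<bullet> unit_of_cos r)" for d :: "real^2"
    using s by (simp add: \<alpha>_def \<beta>_def s_def inner_vec2 inner_unit_of_cos field_simps)
  define s1 where "s1 = (if 0 \<le> \<alpha> then 1 else -1 :: real)"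
  define s2 where "s2 = (if 0 \<le> \<beta> then 1 else -1 :: real)"
  have "{g. 0 \<le> s1 * (g$1 + a) \<and> 0 \<le> s2 * (g \<bullet> unit_of_cos r + t)} \<subseteq> {g. norm c \<le> g \<bullet> u}"
  proof safe
    fix g :: "real^2"
    assume "0 \<le> s1 * (g$1 + a)" "0 \<le> s2 * (g \<bullet> unit_of_cos r + t)"
    then have "0 \<le> \<alpha> * (g$1 + a)" "0 \<le> \<beta> * (g \<bullet> unit_of_cos r + t)"
      by (auto simp: s1_def s2_def split: if_splits intro: mult_nonpos_nonpos)
    then have "0 \<le> (g - c) \<bullet> u"
      using inner_quadrant_corner[OF r] by (simp add: oblique c_def quadrant_corner_component
        inner_diff_left algebra_simps)
    then show "norm c \<le> g \<bullet> u"
      using u by (simp add: inner_diff_left)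
  qed
  then have "gauss2_prob 0 {g. 0 \<le> s1 * (g$1 + a) \<and> 0 \<le> s2 * (g \<bullet> unit_of_cos r + t)}
      \<le> gauss2_prob 0 {g. norm c \<le> g \<bullet> u}"
    by (rule gauss2_prob_0_mono) measurable
  moreover have "s1 \<in> {1, -1}" "s2 \<in> {1, -1}"
    by (simp_all add: s1_def s2_def)
  ultimately have "\<gamma> \<le> gauss2_prob 0 {g. norm c \<le> g \<bullet> u}"
    using mass by (meson order_trans)
  also have "\<dots> \<le> exp (- (norm c)\<^sup>2 / 2) / 2"
    using u by (intro gauss2_prob_0_halfplane_le) simp_all
  finally show ?thesis
    by (simp add: c_def)
qed

section \<open>Growth in the angle\<close>

lemma measure_parallelogram:
  fixes c X Y :: "real^2"
  shows "(+) c ` frame_map X Y ` box 0 (vector [1, 1]) \<in> lmeasurable"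
    and "measure lebesgue ((+) c ` frame_map X Y ` box 0 (vector [1, 1])) = \<bar>X$1 * Y$2 - X$2 * Y$1\<bar>"
proof -
  show "(+) c ` frame_map X Y ` box 0 (vector [1, 1]) \<in> lmeasurable"
    by (intro measurable_translation measurable_linear_image[OF linear_frame_map]) simp
  have "measure lebesgue (box (0::real^2) (vector [1, 1])) = 1"
    by (simp add: measure_lborel_box_eq[simplified] Basis_vec2 axis_eq_axis inner_axis)
  moreover have "det (matrix (frame_map X Y)) = X$1 * Y$2 - X$2 * Y$1"
    by (simp add: det_2 matrix_def frame_map_def axis_def)
  ultimately show "measure lebesgue ((+) c ` frame_map X Y ` box 0 (vector [1, 1]))
      = \<bar>X$1 * Y$2 - X$2 * Y$1\<bar>"
    unfolding measure_translation by (simp add: measure_linear_image[OF linear_frame_map])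
qed

lemma gauss2_prob_0_ge_parallelogram:
  assumes R: "R \<in> sets borel"
    and sub: "\<And>\<alpha> \<beta>. 0 < \<alpha> \<Longrightarrow> \<alpha> < 1 \<Longrightarrow> 0 < \<beta> \<Longrightarrow> \<beta> < 1 \<Longrightarrow> c + \<alpha> *\<^sub>R X + \<beta> *\<^sub>R Y \<in> R"
    and X: "norm X \<le> 1" and Y: "norm Y \<le> 1"
  shows "exp (- (norm c + 2)\<^sup>2 / 2) / (2 * pi) * \<bar>X$1 * Y$2 - X$2 * Y$1\<bar> \<le> gauss2_prob 0 R"
proof -
  define m where "m = exp (- (norm c + 2)\<^sup>2 / 2) / (2 * pi)"
  define K where "K = (+) c ` frame_map X Y ` box 0 (vector [1, 1])"
  have "ennreal m * indicator K x
      \<le> ennreal (exp (- (norm (x - 0))\<^sup>2 / 2) / (2 * pi)) * indicator R x" for x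
  proof (cases "x \<in> K")
    case True
    then obtain z :: "real^2" where "z \<in> box 0 (vector [1, 1])" "x = c + frame_map X Y z"
      unfolding K_def by auto
    then have z: "0 < z$1" "z$1 < 1" "0 < z$2" "z$2 < 1" "x = c + z$1 *\<^sub>R X + z$2 *\<^sub>R Y"
      by (simp_all add: mem_box_cart forall_2 frame_map_def add.assoc)
    then have "norm x \<le> norm c + norm (z$1 *\<^sub>R X) + norm (z$2 *\<^sub>R Y)"
      using norm_triangle_ineq[of c "z$1 *\<^sub>R X + z$2 *\<^sub>R Y"]
        norm_triangle_ineq[of "z$1 *\<^sub>R X" "z$2 *\<^sub>R Y"] by (simp add: add.assoc)
    also have "\<dots> \<le> norm c + 1 + 1"
      using z X Y by (intro add_mono) (simp_all add: mult_le_one)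
    finally have "m \<le> exp (- (norm (x - 0))\<^sup>2 / 2) / (2 * pi)"
      by (simp add: m_def divide_right_mono power_mono)
    moreover have "x \<in> R"
      using sub[OF z(1-4)] z(5) by simp
    ultimately show ?thesis
      using True by (simp add: ennreal_leI)
  qed simp
  then have "(\<integral>\<^sup>+x. ennreal m * indicator K x \<partial>lebesgue)
      \<le> (\<integral>\<^sup>+x. ennreal (exp (- (norm (x - 0))\<^sup>2 / 2) / (2 * pi)) * indicator R x \<partial>lebesgue)"
    by (rule nn_integral_mono)
  also have "\<dots> = emeasure (gauss2 0) R"
    using R unfolding gauss2_def by (simp add: emeasure_density nn_integral_completion)
  finally have "ennreal (m * measure lebesgue K) \<le> ennreal (gauss2_prob 0 R)"
    using measure_parallelogram(1)[of c X Y]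
    by (simp add: K_def nn_integral_cmult_indicator emeasure_eq_measure2
      emeasure_gauss2_0_eq_ennreal ennreal_mult'' m_def[symmetric])
  then show ?thesis
    by (simp add: K_def measure_parallelogram(2) m_def gauss2_prob_0_nonneg)
qed

lemma gauss2_prob_0_wedge_swap:
  assumes r1: "\<bar>r1\<bar> \<le> 1" and r2: "\<bar>r2\<bar> \<le> 1"
  shows "gauss2_prob 0 (halfplane_cos t r1 - halfplane_cos t r2)
    = gauss2_prob 0 (halfplane_cos t r2 - halfplane_cos t r1)"
proof -
  define s1 where "s1 = sqrt (1 - r1\<^sup>2)"
  define s2 where "s2 = sqrt (1 - r2\<^sup>2)"
  have unit: "r1\<^sup>2 + s1\<^sup>2 = 1" "r2\<^sup>2 + s2\<^sup>2 = 1"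
    using sqrt_one_minus_square[OF r1] sqrt_one_minus_square[OF r2] by (simp_all add: s1_def s2_def)
  \<comment> \<open>the reflection exchanging \<open>unit_of_cos r1\<close> and \<open>unit_of_cos r2\<close>\<close>
  define p where "p = (vector [r1 * r2 - s1 * s2, s1 * r2 + r1 * s2] :: real^2)"
  define q where "q = (vector [s1 * r2 + r1 * s2, s1 * s2 - r1 * r2] :: real^2)"
  have "p \<bullet> p = (r1\<^sup>2 + s1\<^sup>2) * (r2\<^sup>2 + s2\<^sup>2)" "q \<bullet> q = (r1\<^sup>2 + s1\<^sup>2) * (r2\<^sup>2 + s2\<^sup>2)" "p \<bullet> q = 0"
    by (simp_all add: p_def q_def inner_vec2 power2_eq_square algebra_simps)
  then have frame: "orthogonal_transformation (frame_map p q)"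
    using unit by (intro orthogonal_transformation_frame_map) simp_all
  have "frame_map p q z \<bullet> unit_of_cos r1 = z$1 * r2 * (r1\<^sup>2 + s1\<^sup>2) + z$2 * s2 * (r1\<^sup>2 + s1\<^sup>2)"
    and "frame_map p q z \<bullet> unit_of_cos r2 = z$1 * r1 * (r2\<^sup>2 + s2\<^sup>2) + z$2 * s1 * (r2\<^sup>2 + s2\<^sup>2)" for z
    by (simp_all add: p_def q_def s1_def s2_def frame_map_def inner_unit_of_cos power2_eq_square algebra_simps)
  then have "frame_map p q z \<bullet> unit_of_cos r1 = z \<bullet> unit_of_cos r2"
    and "frame_map p q z \<bullet> unit_of_cos r2 = z \<bullet> unit_of_cos r1" for z
    using unit by (simp_all add: inner_unit_of_cos s1_def s2_def)
  then show ?thesis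
    using gauss2_prob_orthogonal_change[OF frame, of "halfplane_cos t r1 - halfplane_cos t r2" 0]
    by (simp add: halfplane_cos_def set_diff_eq)
qed

lemma std_quad_prob_increment:
  "std_quad_prob a t r2 - std_quad_prob a t r1
    = gauss2_prob 0 (halfplane_e1 a \<inter> (halfplane_cos t r2 - halfplane_cos t r1))
      - gauss2_prob 0 (halfplane_e1 a \<inter> (halfplane_cos t r1 - halfplane_cos t r2))"
  unfolding std_quad_prob_def
  using gauss2_prob_0_split[of "halfplane_e1 a \<inter> halfplane_cos t r2" "halfplane_cos t r1"]
    gauss2_prob_0_split[of "halfplane_e1 a \<inter> halfplane_cos t r1" "halfplane_cos t r2"]
  by (simp add: Int_Diff Int_ac)

lemma std_quad_prob_increment_cases:
  shows "halfplane_e1 a \<inter> (halfplane_cos t r1 - halfplane_cos t r2) = {} \<Longrightarrow>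
      std_quad_prob a t r2 - std_quad_prob a t r1
        = gauss2_prob 0 (halfplane_e1 a \<inter> (halfplane_cos t r2 - halfplane_cos t r1))"
    and "\<bar>r1\<bar> \<le> 1 \<Longrightarrow> \<bar>r2\<bar> \<le> 1 \<Longrightarrow> halfplane_cos t r2 - halfplane_cos t r1 \<subseteq> halfplane_e1 a \<Longrightarrow>
      std_quad_prob a t r2 - std_quad_prob a t r1
        = gauss2_prob 0 ((halfplane_cos t r1 - halfplane_cos t r2) - halfplane_e1 a)"
proof -
  let ?A = "halfplane_e1 a" and ?H1 = "halfplane_cos t r1" and ?H2 = "halfplane_cos t r2"
  show "?A \<inter> (?H1 - ?H2) = {} \<Longrightarrow>
      std_quad_prob a t r2 - std_quad_prob a t r1 = gauss2_prob 0 (?A \<inter> (?H2 - ?H1))"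
    using std_quad_prob_increment[of a t r2 r1] by (simp add: gauss2_prob_def)
  assume r: "\<bar>r1\<bar> \<le> 1" "\<bar>r2\<bar> \<le> 1" and sub: "?H2 - ?H1 \<subseteq> ?A"
  then have "gauss2_prob 0 (?A \<inter> (?H2 - ?H1)) = gauss2_prob 0 (?H1 - ?H2)"
    using gauss2_prob_0_wedge_swap[OF r, of t] by (simp add: Int_absorb1)
  also have "\<dots> = gauss2_prob 0 ((?H1 - ?H2) \<inter> ?A) + gauss2_prob 0 ((?H1 - ?H2) - ?A)"
    by (rule gauss2_prob_0_split) simp_all
  finally show "std_quad_prob a t r2 - std_quad_prob a t r1 = gauss2_prob 0 ((?H1 - ?H2) - ?A)"
    using std_quad_prob_increment[of a t r2 r1] by (simp add: Int_commute)
qed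

lemma cross_unit_of_cos:
  "(r2 * sqrt (1 - r1\<^sup>2) - r1 * sqrt (1 - r2\<^sup>2)) * x$1
    = sqrt (1 - r1\<^sup>2) * (x \<bullet> unit_of_cos r2) - sqrt (1 - r2\<^sup>2) * (x \<bullet> unit_of_cos r1)"
  by (simp add: inner_unit_of_cos algebra_simps)

lemma bisector_identity:
  assumes "\<bar>r1\<bar> \<le> 1" "\<bar>r2\<bar> \<le> 1"
  defines "s1 \<equiv> sqrt (1 - r1\<^sup>2)" and "s2 \<equiv> sqrt (1 - r2\<^sup>2)"
  shows "2 * (r2 * s1 - r1 * s2) * (s1 + s2) = (r2 - r1) * ((s1 + s2)\<^sup>2 + (r1 + r2)\<^sup>2)"
proof -
  have "s1\<^sup>2 = 1 - r1\<^sup>2" "s2\<^sup>2 = 1 - r2\<^sup>2"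
    using sqrt_one_minus_square assms by simp_all
  then show ?thesis
    by algebra
qed

lemma bisector_bounds:
  assumes r: "-1 < r1" "r1 < r2" "r2 < 1"
  defines "s1 \<equiv> sqrt (1 - r1\<^sup>2)" and "s2 \<equiv> sqrt (1 - r2\<^sup>2)"
    and "b \<equiv> vector [sqrt (1 - r1\<^sup>2) + sqrt (1 - r2\<^sup>2), - (r1 + r2)] :: real^2"
  shows "0 < r2 * s1 - r1 * s2" and "(r2 - r1) / 2 \<le> (r2 * s1 - r1 * s2) / norm b"
proof -
  define D where "D = r2 * s1 - r1 * s2"
  have r': "\<bar>r1\<bar> < 1" "\<bar>r2\<bar> < 1"
    using r by auto
  have s: "0 < s1" "0 < s2"
    unfolding s1_def s2_def using sqrt_one_minus_square_pos r' by auto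
  have norm_b: "(norm b)\<^sup>2 = (s1 + s2)\<^sup>2 + (r1 + r2)\<^sup>2"
    unfolding norm_vec2_square by (simp add: b_def s1_def s2_def power2_eq_square algebra_simps)
  then have "(s1 + s2)\<^sup>2 \<le> (norm b)\<^sup>2"
    by simp
  then have "s1 + s2 \<le> norm b"
    by (rule power2_le_imp_le) simp
  then have b: "s1 + s2 \<le> norm b" "0 < norm b"
    using s by linarith+
  have identity: "2 * D * (s1 + s2) = (r2 - r1) * (norm b)\<^sup>2"
    using bisector_identity[of r1 r2] r' unfolding norm_b D_def s1_def s2_def by simp
  have "0 < (r2 - r1) * (norm b)\<^sup>2"
    using r b by simp
  then have "0 < D * (s1 + s2)"
    using identity by simp
  then show "0 < r2 * s1 - r1 * s2"
    using s by (simp add: D_def zero_less_mult_iff)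
  have "(r2 - r1) * norm b * (s1 + s2) \<le> (r2 - r1) * norm b * norm b"
    using b r by (intro mult_left_mono) simp_all
  also have "\<dots> = 2 * D * (s1 + s2)"
    by (simp add: identity power2_eq_square)
  finally have "(r2 - r1) / 2 * norm b \<le> D"
    using s by (simp add: mult_le_cancel_right_pos)
  then show "(r2 - r1) / 2 \<le> (r2 * s1 - r1 * s2) / norm b"
    using b by (simp add: D_def pos_le_divide_eq)
qed

lemma halfplane_cos_diff_disjoint:
  assumes r: "-1 < r1" "r1 < r2" "r2 < 1"
    and c: "c$1 = -a" "c \<bullet> unit_of_cos r1 = -t" "-t \<le> c \<bullet> unit_of_cos r2"
  shows "halfplane_e1 a \<inter> (halfplane_cos t r1 - halfplane_cos t r2) = {}"
proof -
  define s1 where "s1 = sqrt (1 - r1\<^sup>2)"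
  define s2 where "s2 = sqrt (1 - r2\<^sup>2)"
  have s: "0 < s1" "0 < s2"
    using r sqrt_one_minus_square_pos unfolding s1_def s2_def by auto
  have D: "0 < r2 * s1 - r1 * s2"
    using bisector_bounds(1)[OF r] unfolding s1_def s2_def .
  have False if "g \<in> halfplane_e1 a" "g \<in> halfplane_cos t r1" "g \<notin> halfplane_cos t r2" for g
  proof -
    have "0 \<le> (r2 * s1 - r1 * s2) * (g - c)$1" "0 \<le> s2 * ((g - c) \<bullet> unit_of_cos r1)"
      using that D s c by (simp_all add: halfplane_e1_def halfplane_cos_def inner_diff_left)
    moreover have "s1 * ((g - c) \<bullet> unit_of_cos r2) < 0"
      using that s c by (simp add: halfplane_cos_def inner_diff_left mult_pos_neg)
    ultimately show False
      using cross_unit_of_cos[of r2 r1 "g - c"] unfolding s1_def s2_def by linarith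
  qed
  then show ?thesis
    by blast
qed

lemma halfplane_cos_diff_subset:
  assumes r: "-1 < r1" "r1 < r2" "r2 < 1"
    and c: "c$1 = -a" "c \<bullet> unit_of_cos r1 = -t" "c \<bullet> unit_of_cos r2 < -t"
  shows "halfplane_cos t r2 - halfplane_cos t r1 \<subseteq> halfplane_e1 a"
proof
  define s1 where "s1 = sqrt (1 - r1\<^sup>2)"
  define s2 where "s2 = sqrt (1 - r2\<^sup>2)"
  have s: "0 < s1" "0 < s2"
    using r sqrt_one_minus_square_pos unfolding s1_def s2_def by auto
  fix g
  assume "g \<in> halfplane_cos t r2 - halfplane_cos t r1"
  then have "0 < s1 * ((g - c) \<bullet> unit_of_cos r2)" "s2 * ((g - c) \<bullet> unit_of_cos r1) < 0"
    using s c by (auto simp: halfplane_cos_def inner_diff_left mult_pos_neg)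
  then have "0 < (r2 * s1 - r1 * s2) * (g - c)$1"
    using cross_unit_of_cos[of r2 r1 "g - c"] unfolding s1_def s2_def by linarith
  then show "g \<in> halfplane_e1 a"
    using bisector_bounds(1)[OF r] c
    by (simp add: halfplane_e1_def zero_less_mult_iff s1_def s2_def)
qed

lemma std_quad_prob_increment_ge_parallelogram:
  assumes r: "-1 < r1" "r1 < r2" "r2 < 1"
    and c: "c$1 = -a" "c \<bullet> unit_of_cos r1 = -t"
    and u: "0 \<le> u$1" "u \<bullet> unit_of_cos r1 < 0" "0 \<le> u \<bullet> unit_of_cos r2" "norm u \<le> 1"
    and d: "0 < d$1" "d \<bullet> unit_of_cos r1 \<le> 0" "0 \<le> d \<bullet> unit_of_cos r2" "norm d \<le> 1"
  shows "exp (- (norm c + 2)\<^sup>2 / 2) / (2 * pi) * \<bar>u$1 * d$2 - u$2 * d$1\<bar>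
    \<le> std_quad_prob a t r2 - std_quad_prob a t r1"
proof -
  \<comment> \<open>on either side of the second boundary line, \<open>c\<close> is a vertex of a parallelogram in the gained region\<close>
  have signs: "0 \<le> \<alpha> * u$1" "0 < \<beta> * d$1" "\<alpha> * (u \<bullet> unit_of_cos r1) < 0"
    "\<beta> * (d \<bullet> unit_of_cos r1) \<le> 0" "0 \<le> \<alpha> * (u \<bullet> unit_of_cos r2)" "0 \<le> \<beta> * (d \<bullet> unit_of_cos r2)"
    if "0 < \<alpha>" "0 < \<beta>" for \<alpha> \<beta>
    using that u d by (simp_all add: mult_pos_neg mult_nonneg_nonpos)
  show ?thesis
  proof (cases "-t \<le> c \<bullet> unit_of_cos r2")
    case True
    have "c + \<alpha> *\<^sub>R u + \<beta> *\<^sub>R d \<in> halfplane_e1 a \<inter> (halfplane_cos t r2 - halfplane_cos t r1)"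
      if "0 < \<alpha>" "0 < \<beta>" for \<alpha> \<beta>
      using signs[OF that] c True by (auto simp: halfplane_e1_def halfplane_cos_def inner_add_left)
    then have "exp (- (norm c + 2)\<^sup>2 / 2) / (2 * pi) * \<bar>u$1 * d$2 - u$2 * d$1\<bar>
        \<le> gauss2_prob 0 (halfplane_e1 a \<inter> (halfplane_cos t r2 - halfplane_cos t r1))"
      by (intro gauss2_prob_0_ge_parallelogram u(4) d(4)) auto
    then show ?thesis
      using std_quad_prob_increment_cases(1)[OF halfplane_cos_diff_disjoint[OF r c True]] by simp
  next
    case False
    have "c + \<alpha> *\<^sub>R - u + \<beta> *\<^sub>R - d \<in> (halfplane_cos t r1 - halfplane_cos t r2) - halfplane_e1 a"
      if "0 < \<alpha>" "0 < \<beta>" for \<alpha> \<beta>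
      using signs[OF that] c False
      by (auto simp: halfplane_e1_def halfplane_cos_def inner_diff_left)
    then have "exp (- (norm c + 2)\<^sup>2 / 2) / (2 * pi) * \<bar>(- u)$1 * (- d)$2 - (- u)$2 * (- d)$1\<bar>
        \<le> gauss2_prob 0 ((halfplane_cos t r1 - halfplane_cos t r2) - halfplane_e1 a)"
      using u(4) d(4) by (intro gauss2_prob_0_ge_parallelogram) auto
    moreover have "\<bar>r1\<bar> \<le> 1" "\<bar>r2\<bar> \<le> 1"
      using r by simp_all
    ultimately show ?thesis
      using std_quad_prob_increment_cases(2)[OF _ _ halfplane_cos_diff_subset[OF r c]] False by simp
  qed
qed

lemma std_quad_prob_increment_ge_lower:
  assumes r: "-1 < r1" "r1 < r2" "r2 < 1"
  shows "exp (- (norm (quadrant_corner a t r1) + 2)\<^sup>2 / 2) / (2 * pi) * ((r2 - r1) / 2)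
    \<le> std_quad_prob a t r2 - std_quad_prob a t r1"
proof -
  define s1 where "s1 = sqrt (1 - r1\<^sup>2)"
  define s2 where "s2 = sqrt (1 - r2\<^sup>2)"
  define D where "D = r2 * s1 - r1 * s2"
  define b where "b = (vector [s1 + s2, - (r1 + r2)] :: real^2)"
  define d where "d = (vector [s1, - r1] :: real^2)"
  note bounds = bisector_bounds[OF r, folded s1_def s2_def, folded D_def b_def]
  have r': "\<bar>r1\<bar> < 1" "\<bar>r2\<bar> < 1"
    using r by auto
  have s: "0 < s1" "0 < s2" "s1\<^sup>2 = 1 - r1\<^sup>2"
    unfolding s1_def s2_def using sqrt_one_minus_square_pos r' sqrt_one_minus_square[of r1]
    by simp_all
  have "0 < norm b"
    using bounds(2) r by (cases "b = 0") auto
  \<comment> \<open>\<open>d\<close> runs along the boundary of \<open>halfplane_cos t r1\<close>; \<open>b\<close> bisects the two boundary directions\<close>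
  have "b \<bullet> unit_of_cos r1 = - D" "b \<bullet> unit_of_cos r2 = D"
    "d \<bullet> unit_of_cos r1 = 0" "d \<bullet> unit_of_cos r2 = D"
    by (simp_all add: b_def d_def D_def inner_unit_of_cos s1_def[symmetric] s2_def[symmetric]
      algebra_simps)
  moreover have "0 < d$1" "norm d = 1"
    using s by (simp_all add: d_def norm_eq_sqrt_inner inner_vec2 power2_eq_square)
  moreover have "((1 / norm b) *\<^sub>R b)$1 * d$2 - ((1 / norm b) *\<^sub>R b)$2 * d$1 = D / norm b"
    by (simp add: d_def b_def D_def divide_simps algebra_simps)
  ultimately have "exp (- (norm (quadrant_corner a t r1) + 2)\<^sup>2 / 2) / (2 * pi) * (D / norm b)
      \<le> std_quad_prob a t r2 - std_quad_prob a t r1"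
    using std_quad_prob_increment_ge_parallelogram[OF r quadrant_corner_component
      inner_quadrant_corner[OF r'(1)], of "(1 / norm b) *\<^sub>R b" d] s bounds \<open>0 < norm b\<close>
    by (simp add: b_def)
  moreover have "exp (- (norm (quadrant_corner a t r1) + 2)\<^sup>2 / 2) / (2 * pi) * ((r2 - r1) / 2)
      \<le> exp (- (norm (quadrant_corner a t r1) + 2)\<^sup>2 / 2) / (2 * pi) * (D / norm b)"
    using bounds(2) by (rule mult_left_mono) simp
  ultimately show ?thesis
    by linarith
qed

lemma std_quad_prob_reflect:
  assumes r: "\<bar>r\<bar> \<le> 1"
  shows "std_quad_prob a t r + std_quad_prob (-a) t (-r) = gauss2_prob 0 {z. -t \<le> z$1}"
proof -
  let ?H = "halfplane_cos t (-r)" and ?B = "{z::real^2. z$1 \<le> a}"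
  define flip where "flip = frame_map (vector [-1, 0]) (vector [0, 1])"
  have flip: "orthogonal_transformation flip"
    unfolding flip_def by (rule orthogonal_transformation_frame_map) (simp_all add: inner_vec2)
  \<comment> \<open>\<open>flip\<close> maps \<open>unit_of_cos r\<close> to \<open>unit_of_cos (-r)\<close>; the line \<open>z$1 = a\<close> is a null set\<close>
  have "{z. flip z + 0 \<in> halfplane_e1 a \<inter> halfplane_cos t r} = ?B \<inter> ?H"
    by (auto simp: flip_def frame_map_def halfplane_e1_def halfplane_cos_def inner_unit_of_cos)
  then have "std_quad_prob a t r = gauss2_prob 0 (?B \<inter> ?H)"
    unfolding std_quad_prob_def using gauss2_prob_orthogonal_change[OF flip] by simp
  moreover have "std_quad_prob (-a) t (-r) = gauss2_prob 0 (?H - ?B)"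
  proof (rule antisym)
    have "halfplane_e1 (-a) \<inter> ?H \<subseteq> (?H - ?B) \<union> {z. a \<le> z$1 \<and> z$1 \<le> a + 0}"
      by (auto simp: halfplane_e1_def)
    moreover have S: "?H - ?B \<in> sets borel" "{z::real^2. a \<le> z$1 \<and> z$1 \<le> a + 0} \<in> sets borel"
      by measurable
    ultimately have "std_quad_prob (-a) t (-r)
        \<le> gauss2_prob 0 ((?H - ?B) \<union> {z. a \<le> z$1 \<and> z$1 \<le> a + 0})"
      unfolding std_quad_prob_def by (intro gauss2_prob_0_mono) auto
    also have "\<dots> \<le> gauss2_prob 0 (?H - ?B) + gauss2_prob 0 {z. a \<le> z$1 \<and> z$1 \<le> a + 0}"
      by (rule gauss2_prob_0_union_le[OF S])
    also have "\<dots> \<le> gauss2_prob 0 (?H - ?B)"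
      using gauss2_prob_0_strip_le[of 0 a] by simp
    finally show "std_quad_prob (-a) t (-r) \<le> gauss2_prob 0 (?H - ?B)" .
    show "gauss2_prob 0 (?H - ?B) \<le> std_quad_prob (-a) t (-r)"
      unfolding std_quad_prob_def by (rule gauss2_prob_0_mono) (auto simp: halfplane_e1_def)
  qed
  moreover have "gauss2_prob 0 ?H = gauss2_prob 0 (?B \<inter> ?H) + gauss2_prob 0 (?H - ?B)"
    using gauss2_prob_0_split[of ?H ?B] by (simp add: Int_commute)
  moreover have "gauss2_prob 0 ?H = gauss2_prob 0 {z. -t \<le> z$1}"
    using gauss2_prob_0_direction[of "unit_of_cos (-r)" "\<lambda>x. -t \<le> x"] inner_unit_of_cos_self r
    by (simp add: halfplane_cos_def)
  ultimately show ?thesis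
    by linarith
qed

lemma std_quad_prob_increment_ge_upper:
  assumes r: "-1 < r1" "r1 < r2" "r2 < 1"
  shows "exp (- (norm (quadrant_corner a t r2) + 2)\<^sup>2 / 2) / (2 * pi) * ((r2 - r1) / 2)
    \<le> std_quad_prob a t r2 - std_quad_prob a t r1"
proof -
  have "norm (quadrant_corner (-a) t (-r2)) = norm (quadrant_corner a t r2)"
    by (simp add: quadrant_corner_def norm_eq_sqrt_inner inner_vec2)
  moreover have "std_quad_prob a t r2 - std_quad_prob a t r1
      = std_quad_prob (-a) t (-r1) - std_quad_prob (-a) t (-r2)"
    using std_quad_prob_reflect[of r1 a t] std_quad_prob_reflect[of r2 a t] r by force
  ultimately show ?thesis
    using std_quad_prob_increment_ge_lower[of "-r2" "-r1" "-a" t] r by simp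
qed

section \<open>Estimation by inversion\<close>

text \<open>Inserting \<open>-1\<close> keeps the supremum well defined when no \<open>r\<close> qualifies.\<close>

definition sup_inverse :: "(real \<Rightarrow> real) \<Rightarrow> real \<Rightarrow> real" where
  "sup_inverse F y = Sup (insert (-1) {r. -1 < r \<and> r < 1 \<and> F r \<le> y})"

lemma sup_inverse_le:
  assumes close: "\<And>r. -1 < r \<Longrightarrow> r < 1 \<Longrightarrow> \<bar>F r - G r\<bar> \<le> e1"
    and y: "\<bar>y - G \<rho>\<bar> \<le> e2" and \<rho>: "-1 < \<rho>"
    and above: "\<And>r. \<rho> < r \<Longrightarrow> r < 1 \<Longrightarrow> \<kappa> * (r - \<rho>) \<le> G r - G \<rho>"
    and \<kappa>: "0 < \<kappa>"
  shows "sup_inverse F y \<le> \<rho> + (e1 + e2) / \<kappa>"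
  unfolding sup_inverse_def
proof (rule cSup_least)
  have "0 \<le> e1" "0 \<le> e2"
    using close[of 0] y by linarith+
  then have bound: "0 \<le> (e1 + e2) / \<kappa>"
    using \<kappa> by simp
  fix x
  assume "x \<in> insert (-1) {r. -1 < r \<and> r < 1 \<and> F r \<le> y}"
  then consider "x \<le> \<rho>" | "\<rho> < x" "x < 1" "F x \<le> y"
    using \<rho> by force
  then show "x \<le> \<rho> + (e1 + e2) / \<kappa>"
  proof cases
    case 2
    then have "\<kappa> * (x - \<rho>) \<le> e1 + e2"
      using above[of x] close[of x] y \<rho> by (simp add: abs_le_iff)
    then show ?thesis
      using \<kappa> by (simp add: field_simps)
  qed (use bound in simp)
qed simp

lemma sup_inverse_ge:
  assumes close: "\<And>r. -1 < r \<Longrightarrow> r < 1 \<Longrightarrow> \<bar>F r - G r\<bar> \<le> e1"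
    and y: "\<bar>y - G \<rho>\<bar> \<le> e2" and \<rho>: "\<rho> < 1"
    and below: "\<And>r. -1 < r \<Longrightarrow> r < \<rho> \<Longrightarrow> \<kappa> * (\<rho> - r) \<le> G \<rho> - G r"
    and \<kappa>: "0 < \<kappa>"
  shows "\<rho> - (e1 + e2) / \<kappa> \<le> sup_inverse F y"
proof (rule ccontr)
  let ?S = "insert (-1) {r. -1 < r \<and> r < 1 \<and> F r \<le> y}"
  define B where "B = (e1 + e2) / \<kappa>"
  have bdd: "bdd_above ?S"
    by (rule bdd_aboveI[of _ 1]) auto
  have "0 \<le> e1" "0 \<le> e2"
    using close[of 0] y by linarith+
  then have "0 \<le> B"
    using \<kappa> by (simp add: B_def)
  assume "\<not> \<rho> - (e1 + e2) / \<kappa> \<le> sup_inverse F y"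
  then have less: "Sup ?S < \<rho> - B"
    by (simp add: sup_inverse_def B_def)
  define r where "r = (Sup ?S + (\<rho> - B)) / 2"
  have "-1 \<le> Sup ?S"
    using bdd by (rule cSup_upper[rotated]) simp
  then have r: "-1 < r" "Sup ?S < r" "r < \<rho> - B" "r < 1"
    using less \<open>0 \<le> B\<close> \<rho> by (simp_all add: r_def)
  moreover have "r \<notin> ?S"
    using r(2) cSup_upper[OF _ bdd, of r] by auto
  ultimately have "\<kappa> * (\<rho> - r) < e1 + e2"
    using below[of r] close[of r] y \<open>0 \<le> B\<close> by (simp add: abs_le_iff)
  then have "\<rho> - r < B"
    using \<kappa> by (simp add: B_def field_simps)
  then show False
    using r(3) by simp
qed

lemma sup_inverse_error:
  assumes "\<And>r. -1 < r \<Longrightarrow> r < 1 \<Longrightarrow> \<bar>F r - G r\<bar> \<le> e1"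
    and "\<bar>y - G \<rho>\<bar> \<le> e2" and "-1 < \<rho>" "\<rho> < 1"
    and "\<And>r. \<rho> < r \<Longrightarrow> r < 1 \<Longrightarrow> \<kappa> * (r - \<rho>) \<le> G r - G \<rho>"
    and "\<And>r. -1 < r \<Longrightarrow> r < \<rho> \<Longrightarrow> \<kappa> * (\<rho> - r) \<le> G \<rho> - G r"
    and "0 < \<kappa>"
  shows "\<bar>sup_inverse F y - \<rho>\<bar> \<le> (e1 + e2) / \<kappa>"
  using sup_inverse_le[of F G e1 y \<rho> e2 \<kappa>] sup_inverse_ge[of F G e1 y \<rho> e2 \<kappa>] assms
  by (simp add: abs_le_iff)

lemma abs_inner_less_1_of_independent:
  fixes v1 v2 :: "'a::real_inner"
  assumes "norm v1 = 1" "norm v2 = 1" "v1 \<noteq> v2" "independent {v1, v2}"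
  shows "\<bar>v1 \<bullet> v2\<bar> < 1"
proof -
  have "\<bar>v1 \<bullet> v2\<bar> \<le> 1"
    using Cauchy_Schwarz_ineq2[of v1 v2] assms by simp
  moreover have "\<bar>v1 \<bullet> v2\<bar> \<noteq> 1"
  proof
    assume "\<bar>v1 \<bullet> v2\<bar> = 1"
    then have "v2 = v1 \<or> v2 = - v1"
      using norm_cauchy_schwarz_abs_eq[of v1 v2] assms by auto
    then have "v2 \<in> span {v1}"
      using assms(3) by (auto simp: span_neg span_base)
    then have "dependent {v1, v2}"
      using assms(3) unfolding dependent_def by (intro bexI[of _ v2]) (auto simp: insert_Diff_if)
    then show False
      using assms(4) by simp
  qed
  ultimately show ?thesis
    by simp
qed

lemma sensitivity_constant_ge:
  assumes "0 < \<gamma>" and margin: "2 * \<gamma> \<le> exp (- n\<^sup>2 / 2)"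
  shows "\<gamma>\<^sup>2 / (81 * pi) \<le> exp (- (n + 2)\<^sup>2 / 2) / (2 * pi) / 2"
proof -
  have "exp (4::real) = exp 1 ^ 4"
    by (simp add: exp_of_nat_mult[symmetric])
  also have "\<dots> \<le> 3 ^ 4"
    by (intro power_mono exp_le) simp
  finally have exp_4: "1 / 81 \<le> exp (-4::real)"
    by (simp add: exp_minus field_simps)
  have "(2 * \<gamma>)\<^sup>2 \<le> exp (- n\<^sup>2 / 2) ^ 2"
    using margin assms(1) by (intro power_mono) simp_all
  then have "(2 * \<gamma>)\<^sup>2 * (1 / 81) \<le> exp (- n\<^sup>2 / 2) ^ 2 * exp (-4)"
    using exp_4 by (intro mult_mono) simp_all
  also have "\<dots> = exp (- (n\<^sup>2 + 4))"
    by (simp add: exp_add[symmetric] power2_eq_square exp_diff[symmetric] algebra_simps)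
  also have "\<dots> \<le> exp (- (n + 2)\<^sup>2 / 2)"
    using zero_le_power2[of "n - 2"] by (simp add: power2_eq_square algebra_simps)
  finally show ?thesis
    by (simp add: field_simps power2_eq_square)
qed

lemma quadratic_rate_le_stated_rate:
  assumes \<epsilon>: "0 < \<epsilon>" "\<epsilon> < 1" and \<gamma>: "0 < \<gamma>" "\<gamma> \<le> 1/2"
  shows "1000 * \<epsilon> / \<gamma>\<^sup>2 \<le> 2000 * \<epsilon> / \<gamma> ^ 4 * sqrt (ln (1 / (\<gamma> * \<epsilon>)))"
proof -
  have "\<gamma> * \<epsilon> < \<gamma>"
    using \<epsilon> \<gamma> by simp
  then have "2 * (\<gamma> * \<epsilon>) \<le> 1"
    using \<gamma> by linarith
  then have "2 \<le> 1 / (\<gamma> * \<epsilon>)"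
    using \<epsilon> \<gamma> by (simp add: pos_le_divide_eq)
  then have "ln 2 \<le> ln (1 / (\<gamma> * \<epsilon>))"
    by (rule ln_mono) simp
  then have "(1/2)\<^sup>2 \<le> ln (1 / (\<gamma> * \<epsilon>))"
    using ln2_ge_two_thirds by (simp add: power2_eq_square)
  then have sqrt_ln: "1/2 \<le> sqrt (ln (1 / (\<gamma> * \<epsilon>)))"
    by (rule real_le_rsqrt)
  have "\<gamma> ^ 4 \<le> \<gamma>\<^sup>2"
    using \<gamma> by (simp add: power2_eq_square power4_eq_xxxx mult_le_one)
  then have "1000 * \<epsilon> / \<gamma>\<^sup>2 \<le> 1000 * \<epsilon> / \<gamma> ^ 4"
    using \<epsilon> \<gamma> by (intro divide_left_mono) simp_all
  also have "\<dots> \<le> 1000 * \<epsilon> / \<gamma> ^ 4 * (2 * sqrt (ln (1 / (\<gamma> * \<epsilon>))))"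
    using mult_left_mono[of 1 "2 * sqrt (ln (1 / (\<gamma> * \<epsilon>)))" "1000 * \<epsilon> / \<gamma> ^ 4"] sqrt_ln \<epsilon> \<gamma>
    by simp
  finally show ?thesis
    by simp
qed

lemma inversion_error_le_stated_rate:
  assumes \<epsilon>: "0 < \<epsilon>" "\<epsilon> < 1" and \<gamma>: "0 < \<gamma>" and margin: "2 * \<gamma> \<le> exp (- n\<^sup>2 / 2)"
  shows "(2 * \<epsilon> + \<epsilon>) / (exp (- (n + 2)\<^sup>2 / 2) / (2 * pi) / 2)
    \<le> 2000 * \<epsilon> / \<gamma> ^ 4 * sqrt (ln (1 / (\<gamma> * \<epsilon>)))"
proof -
  have "(2 * \<epsilon> + \<epsilon>) / (exp (- (n + 2)\<^sup>2 / 2) / (2 * pi) / 2) \<le> (2 * \<epsilon> + \<epsilon>) / (\<gamma>\<^sup>2 / (81 * pi))"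
    using sensitivity_constant_ge[OF \<gamma> margin] \<epsilon> \<gamma> by (intro divide_left_mono) simp_all
  also have "\<dots> \<le> 1000 * \<epsilon> / \<gamma>\<^sup>2"
    using pi_less_4 \<epsilon> \<gamma> by (simp add: field_simps)
  also have "\<dots> \<le> 2000 * \<epsilon> / \<gamma> ^ 4 * sqrt (ln (1 / (\<gamma> * \<epsilon>)))"
  proof (rule quadratic_rate_le_stated_rate[OF \<epsilon> \<gamma>])
    have "exp (- n\<^sup>2 / 2) \<le> 1"
      by simp
    then show "\<gamma> \<le> 1/2"
      using margin by linarith
  qed
  finally show ?thesis .
qed

lemma quad_prob_eq_std_quad_prob:
  assumes "norm v1 = 1" "norm v2 = 1" "\<bar>v1 \<bullet> v2\<bar> < 1"
  shows "quad_prob mu v1 v2 = std_quad_prob (v1 \<bullet> mu) (v2 \<bullet> mu) (v1 \<bullet> v2)"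
proof -
  have "{g. 0 \<le> 1 * (g$1 + v1 \<bullet> mu) \<and> 0 \<le> 1 * (g \<bullet> unit_of_cos (v1 \<bullet> v2) + v2 \<bullet> mu)}
      = halfplane_e1 (v1 \<bullet> mu) \<inter> halfplane_cos (v2 \<bullet> mu) (v1 \<bullet> v2)"
    by (auto simp: halfplane_e1_def halfplane_cos_def)
  then show ?thesis
    using quad_prob_eq_std_coordinates[OF assms, of mu 1 1] by (simp add: std_quad_prob_def)
qed

theorem sup_inverse_std_quad_prob_error:
  fixes mu v1 v2 :: "real^2"
  assumes v: "norm v1 = 1" "norm v2 = 1" "\<bar>v1 \<bullet> v2\<bar> < 1"
    and \<epsilon>: "0 < \<epsilon>" "\<epsilon> < 1" and \<gamma>: "0 < \<gamma>"
    and d: "\<bar>d1 - v1 \<bullet> mu\<bar> \<le> \<epsilon>" "\<bar>d2 - v2 \<bullet> mu\<bar> \<le> \<epsilon>"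
    and mass: "\<And>s1 s2. s1 \<in> {1, -1} \<Longrightarrow> s2 \<in> {1, -1} \<Longrightarrow>
      \<gamma> \<le> quad_prob mu (s1 *\<^sub>R v1) (s2 *\<^sub>R v2)"
    and g: "\<bar>g - quad_prob mu v1 v2\<bar> \<le> \<epsilon>"
  shows "\<bar>sup_inverse (std_quad_prob d1 d2) g - v1 \<bullet> v2\<bar>
    \<le> 2000 * \<epsilon> / \<gamma> ^ 4 * sqrt (ln (1 / (\<gamma> * \<epsilon>)))"
proof -
  define \<rho> where "\<rho> = v1 \<bullet> v2"
  define a where "a = v1 \<bullet> mu"
  define b where "b = v2 \<bullet> mu"
  define \<kappa> where "\<kappa> = exp (- (norm (quadrant_corner a b \<rho>) + 2)\<^sup>2 / 2) / (2 * pi) / 2"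
  have \<rho>: "-1 < \<rho>" "\<rho> < 1" "\<bar>\<rho>\<bar> < 1"
    using v(3) by (auto simp: \<rho>_def)
  have margin: "2 * \<gamma> \<le> exp (- (norm (quadrant_corner a b \<rho>))\<^sup>2 / 2)"
    using mass quad_prob_eq_std_coordinates[OF v, of mu]
    by (intro quadrant_mass_le_corner_tail \<rho>(3)) (simp add: \<rho>_def a_def b_def)
  have "\<bar>sup_inverse (std_quad_prob d1 d2) g - \<rho>\<bar> \<le> (2 * \<epsilon> + \<epsilon>) / \<kappa>"
  proof (rule sup_inverse_error[where G = "std_quad_prob a b"])
    show "\<bar>std_quad_prob d1 d2 r - std_quad_prob a b r\<bar> \<le> 2 * \<epsilon>" if "-1 < r" "r < 1" for r
      using std_quad_prob_lipschitz[of r d1 d2 a b] that d unfolding a_def b_def by fastforce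
    show "\<kappa> * (r - \<rho>) \<le> std_quad_prob a b r - std_quad_prob a b \<rho>" if "\<rho> < r" "r < 1" for r
      using std_quad_prob_increment_ge_lower[OF \<rho>(1) that, of a b] by (simp add: \<kappa>_def)
    show "\<kappa> * (\<rho> - r) \<le> std_quad_prob a b \<rho> - std_quad_prob a b r" if "-1 < r" "r < \<rho>" for r
      using std_quad_prob_increment_ge_upper[OF that \<rho>(2), of a b] by (simp add: \<kappa>_def)
  qed (use \<rho> g quad_prob_eq_std_quad_prob[OF v, of mu] in
    \<open>simp_all add: \<kappa>_def \<rho>_def a_def b_def\<close>)
  also have "\<dots> \<le> 2000 * \<epsilon> / \<gamma> ^ 4 * sqrt (ln (1 / (\<gamma> * \<epsilon>)))"
    unfolding \<kappa>_def by (rule inversion_error_le_stated_rate[OF \<epsilon> \<gamma> margin])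
  finally show ?thesis
    unfolding \<rho>_def .
qed

theorem lemma8:
  shows "\<exists>C::real. C > 0 \<and>
    (\<exists>est :: real \<Rightarrow> real \<Rightarrow> real \<Rightarrow> real \<Rightarrow> real \<Rightarrow> real \<Rightarrow> real.
      \<forall>(mu::real^2) (v1::real^2) (v2::real^2) (\<epsilon>::real) (\<gamma>::real)
        (d1::real) (d2::real) (gh :: real \<Rightarrow> real \<Rightarrow> real).
        norm v1 = 1 \<longrightarrow> norm v2 = 1 \<longrightarrow> v1 \<noteq> v2 \<longrightarrow> independent {v1, v2} \<longrightarrow>
        \<epsilon> > 0 \<longrightarrow> \<gamma> > 0 \<longrightarrow> \<epsilon> < 1 \<longrightarrow>
        d1 \<ge> d2 \<longrightarrow> d2 \<ge> 0 \<longrightarrow>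
        \<bar>d1 - v1 \<bullet> mu\<bar> \<le> \<epsilon> \<longrightarrow> \<bar>d2 - v2 \<bullet> mu\<bar> \<le> \<epsilon> \<longrightarrow>
        (\<forall>s1\<in>{1, -1::real}. \<forall>s2\<in>{1, -1::real}.
            quad_prob mu (s1 *\<^sub>R v1) (s2 *\<^sub>R v2) \<ge> \<gamma>) \<longrightarrow>
        (\<forall>s1\<in>{1, -1::real}. \<forall>s2\<in>{1, -1::real}.
            \<bar>gh s1 s2 - quad_prob mu (s1 *\<^sub>R v1) (s2 *\<^sub>R v2)\<bar> \<le> \<epsilon>) \<longrightarrow>
        \<bar>est d1 d2 (gh 1 1) (gh 1 (-1)) (gh (-1) 1) (gh (-1) (-1)) - v1 \<bullet> v2\<bar>
          \<le> C * \<epsilon> / \<gamma> ^ 4 * sqrt (ln (1 / (\<gamma> * \<epsilon>))))"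
proof (intro exI conjI allI impI)
  show "(0::real) < 2000"
    by simp
  fix mu v1 v2 :: "real^2" and \<epsilon> \<gamma> d1 d2 :: real and gh :: "real \<Rightarrow> real \<Rightarrow> real"
  assume "norm v1 = 1" "norm v2 = 1" "v1 \<noteq> v2" "independent {v1, v2}" "0 < \<epsilon>" "0 < \<gamma>" "\<epsilon> < 1"
    "\<bar>d1 - v1 \<bullet> mu\<bar> \<le> \<epsilon>" "\<bar>d2 - v2 \<bullet> mu\<bar> \<le> \<epsilon>"
    "\<forall>s1\<in>{1, -1}. \<forall>s2\<in>{1, -1}. \<gamma> \<le> quad_prob mu (s1 *\<^sub>R v1) (s2 *\<^sub>R v2)"
    "\<forall>s1\<in>{1, -1}. \<forall>s2\<in>{1, -1}. \<bar>gh s1 s2 - quad_prob mu (s1 *\<^sub>R v1) (s2 *\<^sub>R v2)\<bar> \<le> \<epsilon>"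
  then show "\<bar>(\<lambda>d1 d2 g _ _ _. sup_inverse (std_quad_prob d1 d2) g)
      d1 d2 (gh 1 1) (gh 1 (-1)) (gh (-1) 1) (gh (-1) (-1)) - v1 \<bullet> v2\<bar>
    \<le> 2000 * \<epsilon> / \<gamma> ^ 4 * sqrt (ln (1 / (\<gamma> * \<epsilon>)))"
    using abs_inner_less_1_of_independent
    by (intro sup_inverse_std_quad_prob_error) auto
qed

end
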